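(* Let $G$ be a locally Hausdorff, locally compact groupoid and $X$ a locally Hausdorff, locally compact proper (left) $G$-space, with orbit map $q:X\to G\backslash X$. Then $G\backslash X$ is locally Hausdorff and locally compact. More precisely, if $C$ is a compact subset of $X$ that has a compact Hausdorff neighborhood $K$, then $q(C)$ is Hausdorff in $G\backslash X$.
   Context: A locally Hausdorff, locally compact groupoid: groupoid operations continuous, $G^{(0)}$ Hausdorff, each point has a compact Hausdorff neighborhood, range map open. A locally Hausdorff, locally compact space: every point has a compact Hausdorff neighborhood (compact means finite-subcover property only). For a left $G$-action on $X$ with anchor $r:X\to G^{(0)}$, let $G*X=\{(\gamma,x):s(\gamma)=r(x)\}$ and $\Theta(\gamma,x)=(\gamma\cdot x,x)$; $X$ is proper if $\Theta$ is a proper map (equivalently, $\Theta^{-1}(W)$ is compact for every compact $W\subset X\times X$). $G\backslash X$ is the orbit space with the quotient topology. *)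

theory Defs
  imports "HOL-Analysis.Analysis"
begin

definition loc_haus_loc_compact :: "'a topology \<Rightarrow> bool" where
  "loc_haus_loc_compact T \<longleftrightarrow>
     (\<forall>x\<in>topspace T. \<exists>U K. openin T U \<and> x \<in> U \<and> U \<subseteq> K \<and> compactin T K
                              \<and> Hausdorff_space (subtopology T K))"

definition groupoid ::
  "'g set \<Rightarrow> ('g \<Rightarrow> 'g) \<Rightarrow> ('g \<Rightarrow> 'g) \<Rightarrow> ('g \<Rightarrow> 'g \<Rightarrow> 'g) \<Rightarrow> ('g \<Rightarrow> 'g) \<Rightarrow> bool" where
  "groupoid Garr s r m i \<longleftrightarrow>
     (\<forall>g\<in>Garr. s g \<in> Garr \<and> r g \<in> Garr \<and> i g \<in> Garr) \<and>
     (\<forall>g\<in>Garr. r (r g) = r g \<and> s (r g) = r g \<and> r (s g) = s g \<and> s (s g) = s g) \<and>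
     (\<forall>g\<in>Garr. \<forall>h\<in>Garr. s g = r h \<longrightarrow>
         m g h \<in> Garr \<and> s (m g h) = s h \<and> r (m g h) = r g) \<and>
     (\<forall>g\<in>Garr. \<forall>h\<in>Garr. \<forall>k\<in>Garr. s g = r h \<longrightarrow> s h = r k \<longrightarrow>
         m (m g h) k = m g (m h k)) \<and>
     (\<forall>g\<in>Garr. m (r g) g = g \<and> m g (s g) = g) \<and>
     (\<forall>g\<in>Garr. s (i g) = r g \<and> r (i g) = s g \<and> m g (i g) = r g \<and> m (i g) g = s g)"

definition units :: "'g set \<Rightarrow> ('g \<Rightarrow> 'g) \<Rightarrow> 'g set" where
  "units Garr r = r ` Garr"

definition composable :: "'g set \<Rightarrow> ('g \<Rightarrow> 'g) \<Rightarrow> ('g \<Rightarrow> 'g) \<Rightarrow> ('g \<times> 'g) set" where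
  "composable Garr s r = {(g, h). g \<in> Garr \<and> h \<in> Garr \<and> s g = r h}"

definition lhlc_groupoid ::
  "'g topology \<Rightarrow> ('g \<Rightarrow> 'g) \<Rightarrow> ('g \<Rightarrow> 'g) \<Rightarrow> ('g \<Rightarrow> 'g \<Rightarrow> 'g) \<Rightarrow> ('g \<Rightarrow> 'g) \<Rightarrow> bool" where
  "lhlc_groupoid TG s r m i \<longleftrightarrow>
     groupoid (topspace TG) s r m i \<and>
     continuous_map (subtopology (prod_topology TG TG) (composable (topspace TG) s r)) TG
        (\<lambda>(g, h). m g h) \<and>
     continuous_map TG TG i \<and>
     Hausdorff_space (subtopology TG (units (topspace TG) r)) \<and>
     loc_haus_loc_compact TG \<and>
     open_map TG (subtopology TG (units (topspace TG) r)) r"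

definition action_domain ::
  "'g topology \<Rightarrow> ('g \<Rightarrow> 'g) \<Rightarrow> 'x topology \<Rightarrow> ('x \<Rightarrow> 'g) \<Rightarrow> ('g \<times> 'x) set" where
  "action_domain TG s TX rX = {(g, x). g \<in> topspace TG \<and> x \<in> topspace TX \<and> s g = rX x}"

definition left_G_space ::
  "'g topology \<Rightarrow> ('g \<Rightarrow> 'g) \<Rightarrow> ('g \<Rightarrow> 'g) \<Rightarrow> ('g \<Rightarrow> 'g \<Rightarrow> 'g)
   \<Rightarrow> 'x topology \<Rightarrow> ('x \<Rightarrow> 'g) \<Rightarrow> ('g \<Rightarrow> 'x \<Rightarrow> 'x) \<Rightarrow> bool" where
  "left_G_space TG s r m TX rX act \<longleftrightarrow>
     continuous_map TX (subtopology TG (units (topspace TG) r)) rX \<and>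
     continuous_map (subtopology (prod_topology TG TX) (action_domain TG s TX rX)) TX
        (\<lambda>(g, x). act g x) \<and>
     (\<forall>(g, x)\<in>action_domain TG s TX rX. act g x \<in> topspace TX \<and> rX (act g x) = r g) \<and>
     (\<forall>g\<in>topspace TG. \<forall>h\<in>topspace TG. \<forall>x\<in>topspace TX. s g = r h \<longrightarrow> s h = rX x \<longrightarrow>
         act (m g h) x = act g (act h x)) \<and>
     (\<forall>x\<in>topspace TX. act (rX x) x = x)"

definition proper_action ::
  "'g topology \<Rightarrow> ('g \<Rightarrow> 'g) \<Rightarrow> 'x topology \<Rightarrow> ('x \<Rightarrow> 'g) \<Rightarrow> ('g \<Rightarrow> 'x \<Rightarrow> 'x) \<Rightarrow> bool" where
  "proper_action TG s TX rX act \<longleftrightarrow>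
     (\<forall>W. compactin (prod_topology TX TX) W \<longrightarrow>
        compactin (subtopology (prod_topology TG TX) (action_domain TG s TX rX))
          {(g, x) \<in> action_domain TG s TX rX. (act g x, x) \<in> W})"

definition orbit_map ::
  "'g topology \<Rightarrow> ('g \<Rightarrow> 'g) \<Rightarrow> 'x topology \<Rightarrow> ('x \<Rightarrow> 'g) \<Rightarrow> ('g \<Rightarrow> 'x \<Rightarrow> 'x) \<Rightarrow> 'x \<Rightarrow> 'x set" where
  "orbit_map TG s TX rX act x = {act g x | g. g \<in> topspace TG \<and> s g = rX x}"

definition quotient_topology :: "'a topology \<Rightarrow> ('a \<Rightarrow> 'b) \<Rightarrow> 'b topology" where
  "quotient_topology T f =
     topology (\<lambda>U. U \<subseteq> f ` topspace T \<and> openin T {x \<in> topspace T. f x \<in> U})"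

lemma openin_quotient_topology:
  "openin (quotient_topology T f) U \<longleftrightarrow> U \<subseteq> f ` topspace T \<and> openin T {x \<in> topspace T. f x \<in> U}"
proof -
  have "istopology (\<lambda>U. U \<subseteq> f ` topspace T \<and> openin T {x \<in> topspace T. f x \<in> U})"
    unfolding istopology_def
  proof (rule conjI; intro allI impI)
    fix S V assume H: "S \<subseteq> f ` topspace T \<and> openin T {x \<in> topspace T. f x \<in> S}"
                      "V \<subseteq> f ` topspace T \<and> openin T {x \<in> topspace T. f x \<in> V}"
    then have "openin T ({x \<in> topspace T. f x \<in> S} \<inter> {x \<in> topspace T. f x \<in> V})" by (simp add: openin_Int)
    moreover have "{x \<in> topspace T. f x \<in> S \<inter> V} = {x \<in> topspace T. f x \<in> S} \<inter> {x \<in> topspace T. f x \<in> V}" by blast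
    ultimately have "openin T {x \<in> topspace T. f x \<in> S \<inter> V}" by simp
    moreover have "S \<inter> V \<subseteq> f ` topspace T" using H by blast
    ultimately show "S \<inter> V \<subseteq> f ` topspace T \<and> openin T {x \<in> topspace T. f x \<in> S \<inter> V}" by blast
  next
    fix K assume K: "\<forall>S\<in>K. S \<subseteq> f ` topspace T \<and> openin T {x \<in> topspace T. f x \<in> S}"
    have "openin T (\<Union>S\<in>K. {x \<in> topspace T. f x \<in> S})" using K by (intro openin_Union) auto
    moreover have "(\<Union>S\<in>K. {x \<in> topspace T. f x \<in> S}) = {x \<in> topspace T. f x \<in> \<Union>K}" by blast
    ultimately have "openin T {x \<in> topspace T. f x \<in> \<Union>K}" by simp
    moreover have "\<Union>K \<subseteq> f ` topspace T" using K by blast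
    ultimately show "\<Union>K \<subseteq> f ` topspace T \<and> openin T {x \<in> topspace T. f x \<in> \<Union>K}" using K by blast
  qed
  then show ?thesis unfolding quotient_topology_def by simp
qed

definition orbit_space ::
  "'g topology \<Rightarrow> ('g \<Rightarrow> 'g) \<Rightarrow> 'x topology \<Rightarrow> ('x \<Rightarrow> 'g) \<Rightarrow> ('g \<Rightarrow> 'x \<Rightarrow> 'x) \<Rightarrow> 'x set topology" where
  "orbit_space TG s TX rX act = quotient_topology TX (orbit_map TG s TX rX act)"

end

theory Submission
  imports Defs
begin

text \<open>
  The orbit map q : X \<rightarrow> G\X is continuous, and it is open because the source map of G
  is open (it is the range map composed with the inversion homeomorphism).  Hence images
  under q of compact sets are compact, and q(C) is Hausdorff as soon as any two points of C
  lying in different orbits have open neighbourhoods whose q-images are disjoint.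

  To separate points of C \<subseteq> V \<subseteq> K (V open, K compact Hausdorff) we use properness: the
  orbit relation restricted to K \<times> K is the image under \<Theta>(g,x) = (g\<cdot>x, x) of the compact
  preimage of K \<times> K under \<Theta>, hence compact, hence closed in the Hausdorff space K \<times> K.  A pair of
  inequivalent points of V \<times> V therefore has a product neighbourhood avoiding the relation.

  Local compactness and local Hausdorffness of G\X follow: every point x of X has an open
  V and a compact L with x \<in> V \<subseteq> L inside a compact Hausdorff neighbourhood, and then
  q(V) \<subseteq> q(L) is an open set inside a compact Hausdorff set.
\<close>

section \<open>General topology\<close>

lemma topspace_quotient_topology: "topspace (quotient_topology T f) = f ` topspace T"
proof
  show "topspace (quotient_topology T f) \<subseteq> f ` topspace T"
    using openin_quotient_topology[of T f "topspace (quotient_topology T f)"] by simp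
  have "{x \<in> topspace T. f x \<in> f ` topspace T} = topspace T"
    by auto
  then have "openin (quotient_topology T f) (f ` topspace T)"
    unfolding openin_quotient_topology by simp
  then show "f ` topspace T \<subseteq> topspace (quotient_topology T f)"
    by (rule openin_subset)
qed

lemma continuous_map_quotient_topology: "continuous_map T (quotient_topology T f) f"
  unfolding continuous_map topspace_quotient_topology
  by (auto simp: openin_quotient_topology)

text \<open>Inside an open set U contained in a compact Hausdorff set K, every point has an open
  neighbourhood V contained in a compact L \<subseteq> U, because compact Hausdorff spaces are regular.\<close>

lemma compact_neighbourhood_inside:
  assumes U: "openin X U" "x \<in> U" "U \<subseteq> K"
    and K: "compactin X K" "Hausdorff_space (subtopology X K)"
  obtains V L where "openin X V" "compactin X L" "x \<in> V" "V \<subseteq> L" "L \<subseteq> U"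
proof -
  have compact_K: "compact_space (subtopology X K)"
    using K(1) by (rule compact_space_subtopology)
  then have "regular_space (subtopology X K)"
    using K(2) by (rule compact_Hausdorff_imp_regular_space)
  then have base: "neighbourhood_base_of (closedin (subtopology X K)) (subtopology X K)"
    unfolding neighbourhood_base_of_closedin .
  have "openin (subtopology X K) (U \<inter> K)"
    using openin_subtopology_Int[OF U(1)] .
  moreover have "U \<inter> K = U"
    using U(3) by blast
  ultimately have "openin (subtopology X K) U"
    by simp
  then obtain V L where VL: "openin (subtopology X K) V" "closedin (subtopology X K) L"
      "x \<in> V" "V \<subseteq> L" "L \<subseteq> U"
    using base U(2) unfolding neighbourhood_base_of by metis
  obtain W where W: "openin X W" "V = W \<inter> K"
    using VL(1) by (metis openin_subtopology)
  have "V = W \<inter> U"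
    using W(2) VL(4,5) U(3) by blast
  then have "openin X V"
    using W(1) U(1) by (simp add: openin_Int)
  moreover have "compactin X L"
    using closedin_compact_space[OF compact_K VL(2)] by (simp add: compactin_subtopology)
  ultimately show thesis
    using VL(3-5) by (rule that)
qed

text \<open>A compact relation R on a compact Hausdorff set K is closed in K \<times> K, so points of an
  open V \<subseteq> K that are not R-related have a product neighbourhood inside V \<times> V missing R.\<close>

lemma separate_off_compact_relation:
  assumes R: "compactin (prod_topology X X) R" "R \<subseteq> K \<times> K"
    and K: "Hausdorff_space (subtopology X K)"
    and V: "openin X V" "V \<subseteq> K" "x \<in> V" "y \<in> V"
    and xy: "(x, y) \<notin> R"
  obtains A B where "openin X A" "openin X B" "x \<in> A" "y \<in> B" "A \<subseteq> V" "B \<subseteq> V"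
    "(A \<times> B) \<inter> R = {}"
proof -
  have "Hausdorff_space (subtopology (prod_topology X X) (K \<times> K))"
    unfolding subtopology_Times using K Hausdorff_space_prod_topology by blast
  moreover have "compactin (subtopology (prod_topology X X) (K \<times> K)) R"
    using R by (simp add: compactin_subtopology)
  ultimately have "closedin (subtopology (prod_topology X X) (K \<times> K)) R"
    using compactin_imp_closedin by blast
  then obtain F where F: "closedin (prod_topology X X) F" "R = F \<inter> (K \<times> K)"
    by (metis closedin_subtopology)
  define N where "N = (topspace (prod_topology X X) - F) \<inter> (V \<times> V)"
  have "openin (prod_topology X X) N"
    unfolding N_def using F(1) V(1) by (simp add: openin_Int openin_diff openin_prod_Times_iff)
  moreover have "(x, y) \<notin> F"
    using xy F(2) V(2-4) by blast
  then have "(x, y) \<in> N"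
    unfolding N_def using V(3,4) openin_subset[OF V(1)] by auto
  ultimately obtain A B where AB: "openin X A" "openin X B" "x \<in> A" "y \<in> B" "A \<times> B \<subseteq> N"
    using openin_prod_topology_alt by metis
  have "A \<subseteq> V" "B \<subseteq> V"
    using AB(3-5) unfolding N_def by blast+
  moreover have "(A \<times> B) \<inter> R = {}"
    using AB(5) F(2) unfolding N_def by blast
  ultimately show thesis
    using AB(1-4) that by blast
qed

lemma Hausdorff_image_open_map:
  assumes open_f: "\<And>U. openin X U \<Longrightarrow> openin Y (f ` U)"
    and sep: "\<And>x y. x \<in> C \<Longrightarrow> y \<in> C \<Longrightarrow> f x \<noteq> f y \<Longrightarrow>
       \<exists>A B. openin X A \<and> openin X B \<and> x \<in> A \<and> y \<in> B \<and> f ` A \<inter> f ` B = {}"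
  shows "Hausdorff_space (subtopology Y (f ` C))"
  unfolding Hausdorff_space_def
proof (intro allI impI)
  fix p1 p2
  assume "p1 \<in> topspace (subtopology Y (f ` C)) \<and> p2 \<in> topspace (subtopology Y (f ` C)) \<and> p1 \<noteq> p2"
  then have p: "p1 \<in> f ` C" "p2 \<in> f ` C" "p1 \<noteq> p2"
    by (simp_all add: topspace_subtopology)
  obtain x where x: "x \<in> C" "p1 = f x"
    using p(1) by blast
  obtain y where y: "y \<in> C" "p2 = f y"
    using p(2) by blast
  have "f x \<noteq> f y"
    using p(3) x(2) y(2) by simp
  then obtain A B where AB: "openin X A" "openin X B" "x \<in> A" "y \<in> B" "f ` A \<inter> f ` B = {}"
    using sep[OF x(1) y(1)] by blast
  show "\<exists>U W. openin (subtopology Y (f ` C)) U \<and> openin (subtopology Y (f ` C)) W \<and>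
      p1 \<in> U \<and> p2 \<in> W \<and> disjnt U W"
  proof (intro exI conjI)
    show "openin (subtopology Y (f ` C)) (f ` A \<inter> f ` C)"
      by (rule openin_subtopology_Int[OF open_f[OF AB(1)]])
    show "openin (subtopology Y (f ` C)) (f ` B \<inter> f ` C)"
      by (rule openin_subtopology_Int[OF open_f[OF AB(2)]])
    show "p1 \<in> f ` A \<inter> f ` C" "p2 \<in> f ` B \<inter> f ` C"
      using x y AB(3,4) by blast+
    show "disjnt (f ` A \<inter> f ` C) (f ` B \<inter> f ` C)"
      using AB(5) unfolding disjnt_def by blast
  qed
qed

section \<open>Groupoid algebra\<close>

lemma groupoid_units:
  assumes "groupoid G s r m i" "g \<in> G"
  shows "r g \<in> G" "s (r g) = r g"
  using assms unfolding groupoid_def by blast+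

lemma groupoid_compose:
  assumes "groupoid G s r m i" "g \<in> G" "h \<in> G" "s g = r h"
  shows "m g h \<in> G" "s (m g h) = s h" "r (m g h) = r g"
  using assms unfolding groupoid_def by blast+

lemma groupoid_assoc:
  assumes "groupoid G s r m i" "g \<in> G" "h \<in> G" "k \<in> G" "s g = r h" "s h = r k"
  shows "m (m g h) k = m g (m h k)"
  using assms unfolding groupoid_def by blast

lemma groupoid_unit_laws:
  assumes "groupoid G s r m i" "g \<in> G"
  shows "m (r g) g = g" "m g (s g) = g"
  using assms unfolding groupoid_def by blast+

lemma groupoid_inverse:
  assumes "groupoid G s r m i" "g \<in> G"
  shows "i g \<in> G" "s (i g) = r g" "r (i g) = s g" "m g (i g) = r g" "m (i g) g = s g"
  using assms unfolding groupoid_def by blast+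

lemma groupoid_inv_inv:
  assumes grp: "groupoid G s r m i" and g: "g \<in> G"
  shows "i (i g) = g"
proof -
  note inv = groupoid_inverse[OF grp]
  have ig: "i g \<in> G" "i (i g) \<in> G"
    using inv(1) g by auto
  have "i (i g) = m (i (i g)) (m (i g) g)"
    using groupoid_unit_laws(2)[OF grp ig(2)] inv(2,5)[OF ig(1)] inv(3,5)[OF g] by simp
  also have "\<dots> = m (m (i (i g)) (i g)) g"
    using groupoid_assoc[OF grp ig(2) ig(1) g] inv(2)[OF ig(1)] inv(2,3)[OF g] by simp
  also have "\<dots> = g"
    using inv(5)[OF ig(1)] inv(2)[OF g] groupoid_unit_laws(1)[OF grp g] by simp
  finally show ?thesis .
qed

section \<open>Groupoid actions and their orbits\<close>

locale G_space =
  fixes TG :: "'g topology" and s r :: "'g \<Rightarrow> 'g" and m :: "'g \<Rightarrow> 'g \<Rightarrow> 'g" and i :: "'g \<Rightarrow> 'g"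
    and TX :: "'x topology" and rX :: "'x \<Rightarrow> 'g" and act :: "'g \<Rightarrow> 'x \<Rightarrow> 'x"
  assumes lhlc: "lhlc_groupoid TG s r m i"
    and space: "left_G_space TG s r m TX rX act"
begin

abbreviation "q \<equiv> orbit_map TG s TX rX act"
abbreviation "AD \<equiv> action_domain TG s TX rX"

lemma grp: "groupoid (topspace TG) s r m i"
  using lhlc unfolding lhlc_groupoid_def by blast

lemma continuous_anchor: "continuous_map TX (subtopology TG (units (topspace TG) r)) rX"
  using space unfolding left_G_space_def by blast

lemma continuous_act: "continuous_map (subtopology (prod_topology TG TX) AD) TX (\<lambda>(g, x). act g x)"
  using space unfolding left_G_space_def by blast

lemma act_closed:
  assumes "g \<in> topspace TG" "x \<in> topspace TX" "s g = rX x"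
  shows "act g x \<in> topspace TX" "rX (act g x) = r g"
  using assms space unfolding left_G_space_def action_domain_def by blast+

lemma act_mult:
  assumes "g \<in> topspace TG" "h \<in> topspace TG" "x \<in> topspace TX" "s g = r h" "s h = rX x"
  shows "act (m g h) x = act g (act h x)"
  using assms space unfolding left_G_space_def by blast

lemma act_unit: "x \<in> topspace TX \<Longrightarrow> act (rX x) x = x"
  using space unfolding left_G_space_def by blast

text \<open>The source map is open: s = r \<circ> i, where i is a homeomorphism and r is open.\<close>

lemma source_open:
  assumes A: "openin TG A"
  shows "openin (subtopology TG (units (topspace TG) r)) (s ` A)"
proof -
  have ci: "continuous_map TG TG i"
    and r_open: "open_map TG (subtopology TG (units (topspace TG) r)) r"
    using lhlc unfolding lhlc_groupoid_def by blast+
  have AG: "A \<subseteq> topspace TG"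
    using openin_subset[OF A] .
  have "i ` A = {g \<in> topspace TG. i g \<in> A}"
    using AG groupoid_inverse(1)[OF grp] groupoid_inv_inv[OF grp] by (auto, metis image_eqI)
  then have "openin TG (i ` A)"
    using openin_continuous_map_preimage[OF ci A] by simp
  then have "openin (subtopology TG (units (topspace TG) r)) (r ` i ` A)"
    using r_open unfolding open_map_def by blast
  moreover have "r ` i ` A = s ` A"
    using groupoid_inverse(3)[OF grp] AG by (force simp: image_image)
  ultimately show ?thesis by simp
qed

lemma orbit_act_subset:
  assumes "x \<in> topspace TX" "g \<in> topspace TG" "s g = rX x"
  shows "q (act g x) \<subseteq> q x"
proof
  fix z assume "z \<in> q (act g x)"
  then obtain h where h: "h \<in> topspace TG" "s h = rX (act g x)" "z = act h (act g x)"
    unfolding orbit_map_def by blast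
  have "z = act (m h g) x"
    using act_mult[OF h(1) assms(2,1)] h act_closed(2)[OF assms(2,1,3)] assms(3) by simp
  moreover have "m h g \<in> topspace TG" "s (m h g) = rX x"
    using groupoid_compose[OF grp h(1) assms(2)] h(2) act_closed(2)[OF assms(2,1,3)] assms(3)
    by auto
  ultimately show "z \<in> q x"
    unfolding orbit_map_def by blast
qed

lemma act_inverse_cancel:
  assumes "x \<in> topspace TX" "g \<in> topspace TG" "s g = rX x"
  shows "act (i g) (act g x) = x"
proof -
  note inv = groupoid_inverse[OF grp assms(2)]
  have "act (i g) (act g x) = act (m (i g) g) x"
    using act_mult[OF inv(1) assms(2,1)] inv(2) assms(3) by simp
  then show ?thesis
    using inv(5) assms(3) act_unit[OF assms(1)] by simp
qed

lemma orbit_act: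
  assumes "x \<in> topspace TX" "g \<in> topspace TG" "s g = rX x"
  shows "q (act g x) = q x"
proof
  show "q (act g x) \<subseteq> q x"
    using orbit_act_subset[OF assms] .
  note inv = groupoid_inverse[OF grp assms(2)]
  have "q (act (i g) (act g x)) \<subseteq> q (act g x)"
    using orbit_act_subset[OF act_closed(1)[OF assms(2,1,3)] inv(1)] inv(2)
      act_closed(2)[OF assms(2,1,3)] by simp
  then show "q x \<subseteq> q (act g x)"
    using act_inverse_cancel[OF assms] by simp
qed

lemma mem_orbit:
  assumes x: "x \<in> topspace TX"
  shows "x \<in> q x"
proof -
  have "rX x \<in> units (topspace TG) r"
    using continuous_map_image_subset_topspace[OF continuous_anchor] x by auto
  then obtain h where h: "h \<in> topspace TG" "rX x = r h"
    unfolding units_def by auto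
  then have "rX x \<in> topspace TG" "s (rX x) = rX x"
    using groupoid_units[OF grp h(1)] by auto
  then show ?thesis
    unfolding orbit_map_def using act_unit[OF x] by (metis (mono_tags, lifting) mem_Collect_eq)
qed

lemma same_orbit_iff:
  assumes "x \<in> topspace TX" "y \<in> topspace TX"
  shows "q y = q x \<longleftrightarrow> (\<exists>g \<in> topspace TG. s g = rX x \<and> y = act g x)"
proof
  assume "q y = q x"
  then have "y \<in> q x"
    using mem_orbit[OF assms(2)] by simp
  then show "\<exists>g \<in> topspace TG. s g = rX x \<and> y = act g x"
    unfolding orbit_map_def by blast
next
  assume "\<exists>g \<in> topspace TG. s g = rX x \<and> y = act g x"
  then show "q y = q x"
    using orbit_act[OF assms(1)] by blast
qed

text \<open>If h carries z into an open set U, then every point near z is carried into U by some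
  arrow near h: this uses continuity of the action and openness of the source map.\<close>

lemma translate_into_open:
  assumes U: "openin TX U" and z: "z \<in> topspace TX"
    and h: "h \<in> topspace TG" "s h = rX z" "act h z \<in> U"
  obtains N where "openin TX N" "z \<in> N"
    "\<And>z'. z' \<in> N \<Longrightarrow> \<exists>h' \<in> topspace TG. s h' = rX z' \<and> act h' z' \<in> U"
proof -
  define P where "P = {p \<in> topspace (subtopology (prod_topology TG TX) AD). (\<lambda>(g, x). act g x) p \<in> U}"
  have "openin (subtopology (prod_topology TG TX) AD) P"
    unfolding P_def using openin_continuous_map_preimage[OF continuous_act U] .
  then obtain W where W: "openin (prod_topology TG TX) W" "P = W \<inter> AD"
    by (metis openin_subtopology)
  have "(h, z) \<in> P"
    unfolding P_def action_domain_def using h z by auto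
  then obtain A B where AB: "openin TG A" "openin TX B" "h \<in> A" "z \<in> B" "A \<times> B \<subseteq> W"
    using W openin_prod_topology_alt by (metis IntD1)
  define N where "N = {z' \<in> topspace TX. rX z' \<in> s ` A} \<inter> B"
  show thesis
  proof (rule that)
    show "openin TX N"
      unfolding N_def using openin_continuous_map_preimage[OF continuous_anchor source_open[OF AB(1)]] AB(2)
      by (rule openin_Int)
    show "z \<in> N"
      unfolding N_def using z h(2) AB(3,4) by (metis (mono_tags, lifting) IntI image_eqI mem_Collect_eq)
  next
    fix z' assume "z' \<in> N"
    then obtain h' where h': "h' \<in> A" "s h' = rX z'" "z' \<in> B" "z' \<in> topspace TX"
      unfolding N_def by auto
    have h'G: "h' \<in> topspace TG"
      using openin_subset[OF AB(1)] h'(1) by auto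
    have "(h', z') \<in> W \<inter> AD"
      using AB(5) h' h'G unfolding action_domain_def by auto
    then have "act h' z' \<in> U"
      unfolding W(2)[symmetric] P_def by simp
    then show "\<exists>h' \<in> topspace TG. s h' = rX z' \<and> act h' z' \<in> U"
      using h'G h'(2) by blast
  qed
qed

lemma orbit_map_open:
  assumes U: "openin TX U"
  shows "openin (orbit_space TG s TX rX act) (q ` U)"
proof -
  have UX: "U \<subseteq> topspace TX"
    using openin_subset[OF U] .
  have "openin TX {x \<in> topspace TX. q x \<in> q ` U}"
  proof (subst openin_subopen, intro ballI)
    fix z assume z: "z \<in> {x \<in> topspace TX. q x \<in> q ` U}"
    then obtain u where u: "u \<in> U" "q u = q z"
      by auto
    then obtain h where h: "h \<in> topspace TG" "s h = rX z" "u = act h z"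
      using same_orbit_iff[of z u] z UX by auto
    obtain N where N: "openin TX N" "z \<in> N"
      "\<And>z'. z' \<in> N \<Longrightarrow> \<exists>h' \<in> topspace TG. s h' = rX z' \<and> act h' z' \<in> U"
      using translate_into_open[OF U _ h(1,2)] z h(3) u(1) by blast
    have "N \<subseteq> {x \<in> topspace TX. q x \<in> q ` U}"
    proof
      fix z' assume z': "z' \<in> N"
      then obtain h' where h': "h' \<in> topspace TG" "s h' = rX z'" "act h' z' \<in> U"
        using N(3) by blast
      have "z' \<in> topspace TX"
        using openin_subset[OF N(1)] z' by auto
      moreover have "q (act h' z') = q z'"
        using orbit_act[OF calculation h'(1,2)] .
      ultimately show "z' \<in> {x \<in> topspace TX. q x \<in> q ` U}"
        using h'(3) by (metis (mono_tags, lifting) image_eqI mem_Collect_eq)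
    qed
    then show "\<exists>T. openin TX T \<and> z \<in> T \<and> T \<subseteq> {x \<in> topspace TX. q x \<in> q ` U}"
      using N(1,2) by blast
  qed
  then show ?thesis
    unfolding orbit_space_def openin_quotient_topology using UX by blast
qed

end

section \<open>Proper actions\<close>

locale proper_G_space = G_space +
  assumes proper: "proper_action TG s TX rX act"
begin

text \<open>On a compact set K the orbit relation is compact: it is the image under
  \<Theta>(g,x) = (g\<cdot>x, x) of the compact set of arrows moving a point of K into K.\<close>

lemma orbit_relation_compact:
  assumes K: "compactin TX K"
  shows "compactin (prod_topology TX TX) {(a, b) \<in> K \<times> K. q a = q b}"
proof -
  let ?\<Theta> = "\<lambda>(g, x). (act g x, x)"
  define P where "P = {(g, x) \<in> AD. (act g x, x) \<in> K \<times> K}"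
  have "compactin (prod_topology TX TX) (K \<times> K)"
    using K by (simp add: compactin_Times)
  then have P: "compactin (subtopology (prod_topology TG TX) AD) P"
    using proper unfolding proper_action_def P_def by blast
  have "continuous_map (subtopology (prod_topology TG TX) AD) (prod_topology TX TX) ?\<Theta>"
    unfolding continuous_map_pairwise o_def case_prod_unfold
    using continuous_act continuous_map_from_subtopology[OF continuous_map_snd]
    by (simp add: case_prod_unfold)
  then have "compactin (prod_topology TX TX) (?\<Theta> ` P)"
    using image_compactin[OF P] by blast
  moreover have "?\<Theta> ` P = {(a, b) \<in> K \<times> K. q a = q b}"
  proof
    show "?\<Theta> ` P \<subseteq> {(a, b) \<in> K \<times> K. q a = q b}"
      unfolding P_def action_domain_def using orbit_act by auto
    have "(a, b) \<in> ?\<Theta> ` P" if ab: "a \<in> K" "b \<in> K" "q a = q b" for a b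
    proof -
      have "a \<in> topspace TX" "b \<in> topspace TX"
        using ab compactin_subset_topspace[OF K] by auto
      then obtain g where "g \<in> topspace TG" "s g = rX b" "a = act g b"
        using same_orbit_iff ab(3) by blast
      then show ?thesis
        unfolding P_def action_domain_def using ab \<open>b \<in> topspace TX\<close> by (auto intro!: image_eqI)
    qed
    then show "{(a, b) \<in> K \<times> K. q a = q b} \<subseteq> ?\<Theta> ` P"
      by blast
  qed
  ultimately show ?thesis
    by simp
qed

lemma orbit_separation:
  assumes K: "compactin TX K" "Hausdorff_space (subtopology TX K)"
    and V: "openin TX V" "V \<subseteq> K" "x \<in> V" "y \<in> V"
    and xy: "q x \<noteq> q y"
  shows "\<exists>A B. openin TX A \<and> openin TX B \<and> x \<in> A \<and> y \<in> B \<and> q ` A \<inter> q ` B = {}"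
proof -
  let ?R = "{(a, b) \<in> K \<times> K. q a = q b}"
  have "(x, y) \<notin> ?R"
    using xy by simp
  then obtain A B where AB: "openin TX A" "openin TX B" "x \<in> A" "y \<in> B" "A \<subseteq> V" "B \<subseteq> V"
    "(A \<times> B) \<inter> ?R = {}"
    using separate_off_compact_relation[OF orbit_relation_compact[OF K(1)] _ K(2) V] by blast
  have "q ` A \<inter> q ` B = {}"
    using AB(5-7) V(2) by blast
  then show ?thesis
    using AB(1-4) by blast
qed

lemma Hausdorff_orbit_image:
  assumes K: "compactin TX K" "Hausdorff_space (subtopology TX K)"
    and V: "openin TX V" "C \<subseteq> V" "V \<subseteq> K"
  shows "Hausdorff_space (subtopology (orbit_space TG s TX rX act) (q ` C))"
proof (rule Hausdorff_image_open_map)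
  show "\<And>U. openin TX U \<Longrightarrow> openin (orbit_space TG s TX rX act) (q ` U)"
    by (rule orbit_map_open)
  show "\<exists>A B. openin TX A \<and> openin TX B \<and> x \<in> A \<and> y \<in> B \<and> q ` A \<inter> q ` B = {}"
    if "x \<in> C" "y \<in> C" "q x \<noteq> q y" for x y
    using orbit_separation[OF K V(1,3)] that V(2) by blast
qed

lemma lhlc_orbit_space:
  assumes lhlc_X: "loc_haus_loc_compact TX"
  shows "loc_haus_loc_compact (orbit_space TG s TX rX act)"
  unfolding loc_haus_loc_compact_def
proof
  fix p assume "p \<in> topspace (orbit_space TG s TX rX act)"
  then obtain x where x: "x \<in> topspace TX" "p = q x"
    unfolding orbit_space_def topspace_quotient_topology by blast
  obtain U K where UK: "openin TX U" "x \<in> U" "U \<subseteq> K" "compactin TX K"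
      "Hausdorff_space (subtopology TX K)"
    using lhlc_X x(1) unfolding loc_haus_loc_compact_def by blast
  obtain V L where VL: "openin TX V" "compactin TX L" "x \<in> V" "V \<subseteq> L" "L \<subseteq> U"
    using compact_neighbourhood_inside[OF UK] .
  have "openin (orbit_space TG s TX rX act) (q ` V)"
    using orbit_map_open[OF VL(1)] .
  moreover have "compactin (orbit_space TG s TX rX act) (q ` L)"
    unfolding orbit_space_def using image_compactin[OF VL(2) continuous_map_quotient_topology] .
  moreover have "Hausdorff_space (subtopology (orbit_space TG s TX rX act) (q ` L))"
    using Hausdorff_orbit_image[OF UK(4,5) UK(1) VL(5) UK(3)] .
  ultimately show "\<exists>U K. openin (orbit_space TG s TX rX act) U \<and> p \<in> U \<and> U \<subseteq> K \<and>
      compactin (orbit_space TG s TX rX act) K \<and>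
      Hausdorff_space (subtopology (orbit_space TG s TX rX act) K)"
    using x(2) VL(3,4) by blast
qed

end

theorem mainTheorem3:
  fixes TG :: "'g topology" and s r :: "'g \<Rightarrow> 'g" and m :: "'g \<Rightarrow> 'g \<Rightarrow> 'g" and i :: "'g \<Rightarrow> 'g"
    and TX :: "'x topology" and rX :: "'x \<Rightarrow> 'g" and act :: "'g \<Rightarrow> 'x \<Rightarrow> 'x"
  assumes "lhlc_groupoid TG s r m i"
    and "left_G_space TG s r m TX rX act"
    and "loc_haus_loc_compact TX"
    and "proper_action TG s TX rX act"
  shows "loc_haus_loc_compact (orbit_space TG s TX rX act) \<and>
         (\<forall>C K. compactin TX C \<longrightarrow> compactin TX K \<longrightarrow> Hausdorff_space (subtopology TX K) \<longrightarrow>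
             (\<exists>U. openin TX U \<and> C \<subseteq> U \<and> U \<subseteq> K) \<longrightarrow>
             Hausdorff_space (subtopology (orbit_space TG s TX rX act)
                                (orbit_map TG s TX rX act ` C)))"
proof -
  interpret proper_G_space TG s r m i TX rX act
    using assms(1,2,4) by (unfold_locales)
  show ?thesis
    using lhlc_orbit_space[OF assms(3)] Hausdorff_orbit_image by blast
qed

end
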